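(* The DS matching and pricing scheme described in the context is budget balancing: $\sum_{d\in\mathcal{D}^*}q_d=\sum_{r\in\mathcal{R}^*}q_r$.
   Context: One decision epoch with finite sets $\mathcal{D}$ (drivers) and $\mathcal{R}$ (riders). Rider $r$ requests a trip of shortest-route length $h_r$ with destination $t_r$; $\tau_{dr}\ge0$ is the pick-up distance from driver $d$ to rider $r$, $\tau_d^{\min}=\min_{r}\tau_{dr}$, $\tau_r^{\min}=\min_d\tau_{dr}$. Public constants $\alpha,\beta>0$, and $f(t_r)$ is a given opportunity cost depending on the destination. Driver $d$ reports a bid $b_d$ and rider $r$ a bid $\delta_r$. For a potential match $(d,r)$ the valuations are $P_d=\alpha h_r+b_d(\tau_{dr}-\tau_d^{\min})+f(t_r)$ and $P_r=\beta h_r-\delta_r(\tau_{dr}-\tau_r^{\min})$, and the social welfare is $\sigma_{dr}=P_r-P_d$. Each potential match has a sensing gain $\zeta_{dr}\ge0$ not depending on bids. DS matching problem: maximize $\sum_{r,d}\zeta_{dr}x_{dr}$ subject to $\sum_r x_{dr}\le1$ $\forall d$, $\sum_d x_{dr}\le 1$ $\forall r$, $\sum_{r,d}\sigma_{dr}x_{dr}\ge0$, $x_{dr}\in\{0,1\}$; let $x^*$ be an optimal solution with value $U^*$, $\mathcal{D}^*,\mathcal{R}^*$ the sets of matched drivers and riders, and $V=\sum_{r,d}\sigma_{dr}x^*_{dr}$. For $d\in\mathcal{D}^*$ let $U^*_{d-}$ be the optimal value of the same problem with driver $d$ removed and $\Delta U_d=U^*-U^*_{d-}$; analogously $\Delta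 U_r=U^*-U^*_{r-}$ for $r\in\mathcal{R}^*$. Shares: $\lambda_d=\Delta U_d/(\sum_{d'\in\mathcal{D}^*}\Delta U_{d'}+\sum_{r'\in\mathcal{R}^*}\Delta U_{r'})$ and $\lambda_r=\Delta U_r/(\text{same denominator})$ (the denominator is taken to be nonzero so the shares are defined). Bonuses $\rho_d=V\lambda_d$, $\rho_r=V\lambda_r$. For a matched pair $(d,r)$ (with $P_d,P_r$ evaluated at that pair), the platform pays driver $d$ the amount $q_d=P_d+\rho_d$ and charges rider $r$ the amount $q_r=P_r-\rho_r$. *)

theory Defs
  imports Complex_Main
begin

definition tau_min_drv :: "'r set \<Rightarrow> ('d \<Rightarrow> 'r \<Rightarrow> real) \<Rightarrow> 'd \<Rightarrow> real" where
  "tau_min_drv R tau d = Min ((\<lambda>r. tau d r) ` R)"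

definition tau_min_rdr :: "'d set \<Rightarrow> ('d \<Rightarrow> 'r \<Rightarrow> real) \<Rightarrow> 'r \<Rightarrow> real" where
  "tau_min_rdr D tau r = Min ((\<lambda>d. tau d r) ` D)"

definition val_drv :: "real \<Rightarrow> ('l \<Rightarrow> real) \<Rightarrow> ('r \<Rightarrow> 'l) \<Rightarrow> ('r \<Rightarrow> real) \<Rightarrow> ('d \<Rightarrow> real)
    \<Rightarrow> ('d \<Rightarrow> 'r \<Rightarrow> real) \<Rightarrow> 'r set \<Rightarrow> 'd \<Rightarrow> 'r \<Rightarrow> real" where
  "val_drv \<alpha> f t h b tau R d r = \<alpha> * h r + b d * (tau d r - tau_min_drv R tau d) + f (t r)"

definition val_rdr :: "real \<Rightarrow> ('r \<Rightarrow> real) \<Rightarrow> ('r \<Rightarrow> real)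
    \<Rightarrow> ('d \<Rightarrow> 'r \<Rightarrow> real) \<Rightarrow> 'd set \<Rightarrow> 'd \<Rightarrow> 'r \<Rightarrow> real" where
  "val_rdr \<beta> h \<delta> tau D d r = \<beta> * h r - \<delta> r * (tau d r - tau_min_rdr D tau r)"

definition welfare :: "real \<Rightarrow> real \<Rightarrow> ('l \<Rightarrow> real) \<Rightarrow> ('r \<Rightarrow> 'l) \<Rightarrow> ('r \<Rightarrow> real)
    \<Rightarrow> ('d \<Rightarrow> real) \<Rightarrow> ('r \<Rightarrow> real) \<Rightarrow> ('d \<Rightarrow> 'r \<Rightarrow> real) \<Rightarrow> 'd set \<Rightarrow> 'r set
    \<Rightarrow> 'd \<Rightarrow> 'r \<Rightarrow> real" where
  "welfare \<alpha> \<beta> f t h b \<delta> tau D R d r =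
     val_rdr \<beta> h \<delta> tau D d r - val_drv \<alpha> f t h b tau R d r"

text \<open>A 0/1 assignment x is represented by the set M of pairs (d,r) with x_{dr} = 1.
  Feasibility for the DS matching problem.\<close>
definition ds_feasible :: "'d set \<Rightarrow> 'r set \<Rightarrow> ('d \<Rightarrow> 'r \<Rightarrow> real) \<Rightarrow> ('d \<times> 'r) set \<Rightarrow> bool" where
  "ds_feasible D R \<sigma> M \<longleftrightarrow>
     M \<subseteq> D \<times> R \<and>
     (\<forall>d r r'. (d, r) \<in> M \<and> (d, r') \<in> M \<longrightarrow> r = r') \<and>
     (\<forall>d d' r. (d, r) \<in> M \<and> (d', r) \<in> M \<longrightarrow> d = d') \<and>
     (\<Sum>(d, r)\<in>M. \<sigma> d r) \<ge> 0"

definition ds_objective :: "('d \<Rightarrow> 'r \<Rightarrow> real) \<Rightarrow> ('d \<times> 'r) set \<Rightarrow> real" where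
  "ds_objective \<zeta> M = (\<Sum>(d, r)\<in>M. \<zeta> d r)"

definition ds_opt_value :: "'d set \<Rightarrow> 'r set \<Rightarrow> ('d \<Rightarrow> 'r \<Rightarrow> real) \<Rightarrow> ('d \<Rightarrow> 'r \<Rightarrow> real) \<Rightarrow> real" where
  "ds_opt_value D R \<sigma> \<zeta> = Max (ds_objective \<zeta> ` {M. ds_feasible D R \<sigma> M})"

definition ds_optimal :: "'d set \<Rightarrow> 'r set \<Rightarrow> ('d \<Rightarrow> 'r \<Rightarrow> real) \<Rightarrow> ('d \<Rightarrow> 'r \<Rightarrow> real)
    \<Rightarrow> ('d \<times> 'r) set \<Rightarrow> bool" where
  "ds_optimal D R \<sigma> \<zeta> M \<longleftrightarrow> ds_feasible D R \<sigma> M \<and>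
     (\<forall>M'. ds_feasible D R \<sigma> M' \<longrightarrow> ds_objective \<zeta> M' \<le> ds_objective \<zeta> M)"

end

theory Submission
  imports Defs
begin

text \<open>Neither optimality nor the marginal contributions matter, only that a feasible
  assignment is a matching: summing over matched drivers (or riders) together with their
  partners is then summing over the matched pairs. Since the shares sum to one, the payments
  to drivers exceed the charges to riders by \<open>\<Sum> P\<^sub>d - \<Sum> P\<^sub>r + V\<close>, and this vanishes
  because \<open>V = \<Sum> (P\<^sub>r - P\<^sub>d)\<close>.\<close>

lemma ds_feasible_inj_on_fst: "ds_feasible D R \<sigma> M \<Longrightarrow> inj_on fst M"
  unfolding ds_feasible_def inj_on_def by auto

lemma ds_feasible_inj_on_snd: "ds_feasible D R \<sigma> M \<Longrightarrow> inj_on snd M"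
  unfolding ds_feasible_def inj_on_def by (metis prod.collapse)

lemma sum_fst_image_partner:
  assumes "inj_on fst M"
  shows "(\<Sum>d\<in>fst ` M. g d (THE r. (d, r) \<in> M)) = (\<Sum>(d, r)\<in>M. g d r)"
proof -
  have "(THE r'. (d, r') \<in> M) = r" if "(d, r) \<in> M" for d r
  proof (rule the_equality)
    show "r' = r" if "(d, r') \<in> M" for r'
      using inj_onD[OF assms, of "(d, r')" "(d, r)"] \<open>(d, r) \<in> M\<close> that by simp
  qed (fact that)
  then show ?thesis
    by (auto simp: sum.reindex[OF assms] intro: sum.cong)
qed

lemma sum_snd_image_partner:
  assumes "inj_on snd M"
  shows "(\<Sum>r\<in>snd ` M. g (THE d. (d, r) \<in> M) r) = (\<Sum>(d, r)\<in>M. g d r)"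
proof -
  have "(THE d'. (d', r) \<in> M) = d" if "(d, r) \<in> M" for d r
  proof (rule the_equality)
    show "d' = d" if "(d', r) \<in> M" for d'
      using inj_onD[OF assms, of "(d', r)" "(d, r)"] \<open>(d, r) \<in> M\<close> that by simp
  qed (fact that)
  then show ?thesis
    by (auto simp: sum.reindex[OF assms] intro: sum.cong)
qed

lemma sum_proportional_shares:
  fixes a :: "'a \<Rightarrow> real" and c :: "'b \<Rightarrow> real"
  assumes "sum a A + sum c B \<noteq> 0"
  shows "(\<Sum>x\<in>A. V * (a x / (sum a A + sum c B))) + (\<Sum>y\<in>B. V * (c y / (sum a A + sum c B))) = V"
  using assms
  by (simp add: sum_distrib_left[symmetric] sum_divide_distrib[symmetric]
      flip: distrib_left add_divide_distrib)

lemma matching_budget_balance: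
  fixes M :: "('d \<times> 'r) set" and Pd Pr :: "'d \<Rightarrow> 'r \<Rightarrow> real" and A :: "'d \<Rightarrow> real" and B :: "'r \<Rightarrow> real"
  defines "S \<equiv> (\<Sum>d\<in>fst ` M. A d) + (\<Sum>r\<in>snd ` M. B r)"
    and "V \<equiv> (\<Sum>(d, r)\<in>M. Pr d r - Pd d r)"
  assumes inj_fst: "inj_on fst M" and inj_snd: "inj_on snd M"
    and S_nz: "S \<noteq> 0"
  shows "(\<Sum>d\<in>fst ` M. Pd d (THE r. (d, r) \<in> M) + V * (A d / S))
       = (\<Sum>r\<in>snd ` M. Pr (THE d. (d, r) \<in> M) r - V * (B r / S))"
proof -
  have V_eq: "V = (\<Sum>(d, r)\<in>M. Pr d r) - (\<Sum>(d, r)\<in>M. Pd d r)"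
    unfolding V_def by (simp add: case_prod_beta sum_subtractf)
  have shares: "(\<Sum>d\<in>fst ` M. V * (A d / S)) + (\<Sum>r\<in>snd ` M. V * (B r / S)) = V"
    using S_nz unfolding S_def by (rule sum_proportional_shares)
  have "(\<Sum>d\<in>fst ` M. Pd d (THE r. (d, r) \<in> M) + V * (A d / S))
      = (\<Sum>(d, r)\<in>M. Pd d r) + (\<Sum>d\<in>fst ` M. V * (A d / S))"
    by (simp add: sum.distrib sum_fst_image_partner[OF inj_fst])
  also have "\<dots> = (\<Sum>(d, r)\<in>M. Pr d r) - (\<Sum>r\<in>snd ` M. V * (B r / S))"
    using V_eq shares by linarith
  also have "\<dots> = (\<Sum>r\<in>snd ` M. Pr (THE d. (d, r) \<in> M) r - V * (B r / S))"
    by (simp add: sum_subtractf sum_snd_image_partner[OF inj_snd])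
  finally show ?thesis .
qed

theorem proposition2:
  fixes D :: "'d set" and R :: "'r set"
    and \<alpha> \<beta> :: real
    and f :: "'l \<Rightarrow> real" and t :: "'r \<Rightarrow> 'l" and h :: "'r \<Rightarrow> real"
    and tau :: "'d \<Rightarrow> 'r \<Rightarrow> real" and \<zeta> :: "'d \<Rightarrow> 'r \<Rightarrow> real"
    and b :: "'d \<Rightarrow> real" and \<delta> :: "'r \<Rightarrow> real"
    and M :: "('d \<times> 'r) set"
  assumes finD: "finite D" and finR: "finite R"
    and alpha_pos: "\<alpha> > 0" and beta_pos: "\<beta> > 0"
    and tau_nonneg: "\<forall>d r. tau d r \<ge> 0"
    and zeta_nonneg: "\<forall>d r. \<zeta> d r \<ge> 0"
    and opt: "ds_optimal D R (welfare \<alpha> \<beta> f t h b \<delta> tau D R) \<zeta> M"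
    and denom_nz:
      "(let Ustar = ds_opt_value D R (welfare \<alpha> \<beta> f t h b \<delta> tau D R) \<zeta>;
            dU_d = (\<lambda>d. Ustar - ds_opt_value (D - {d}) R (welfare \<alpha> \<beta> f t h b \<delta> tau (D - {d}) R) \<zeta>);
            dU_r = (\<lambda>r. Ustar - ds_opt_value D (R - {r}) (welfare \<alpha> \<beta> f t h b \<delta> tau D (R - {r})) \<zeta>)
        in (\<Sum>d\<in>fst ` M. dU_d d) + (\<Sum>r\<in>snd ` M. dU_r r) \<noteq> 0)"
  shows
    "(let \<sigma> = welfare \<alpha> \<beta> f t h b \<delta> tau D R;
          Ustar = ds_opt_value D R \<sigma> \<zeta>;
          Dstar = fst ` M; Rstar = snd ` M;
          V = (\<Sum>(d, r)\<in>M. \<sigma> d r);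
          dU_d = (\<lambda>d. Ustar - ds_opt_value (D - {d}) R (welfare \<alpha> \<beta> f t h b \<delta> tau (D - {d}) R) \<zeta>);
          dU_r = (\<lambda>r. Ustar - ds_opt_value D (R - {r}) (welfare \<alpha> \<beta> f t h b \<delta> tau D (R - {r})) \<zeta>);
          denom = (\<Sum>d\<in>Dstar. dU_d d) + (\<Sum>r\<in>Rstar. dU_r r);
          \<rho>_d = (\<lambda>d. V * (dU_d d / denom));
          \<rho>_r = (\<lambda>r. V * (dU_r r / denom));
          partner_of_d = (\<lambda>d. THE r. (d, r) \<in> M);
          partner_of_r = (\<lambda>r. THE d. (d, r) \<in> M);
          q_d = (\<lambda>d. val_drv \<alpha> f t h b tau R d (partner_of_d d) + \<rho>_d d);
          q_r = (\<lambda>r. val_rdr \<beta> h \<delta> tau D (partner_of_r r) r - \<rho>_r r)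
      in (\<Sum>d\<in>Dstar. q_d d) = (\<Sum>r\<in>Rstar. q_r r))"
proof -
  have feas: "ds_feasible D R (welfare \<alpha> \<beta> f t h b \<delta> tau D R) M"
    using opt by (simp add: ds_optimal_def)
  show ?thesis
    unfolding Let_def welfare_def
    by (rule matching_budget_balance[OF ds_feasible_inj_on_fst[OF feas]
          ds_feasible_inj_on_snd[OF feas] denom_nz[unfolded Let_def welfare_def]])
qed

end
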